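(* Let $r\ge3$ be odd. For any $n\ge r-1$ and $A>0$, there exists $f\in C^r[-1,1]$, identically $0$ on $[-1,-1/2]$ and nonnegative on $[-1,1]$, such that every algebraic polynomial $P_n$ of degree $\le n$ which is nonnegative on $[-1/2,1/2]$ and satisfies $P_n^{(i)}(0)=f^{(i)}(0)$ for $0\le i\le r-1$ obeys $$\|f-P_n\|>A\,\|f^{(r)}\|.$$
   Context: $\|\cdot\|$ is the sup norm on $[-1,1]$. *)

theory Defs
  imports "HOL-Analysis.Analysis" "HOL-Computational_Algebra.Polynomial"
begin

text \<open>D is a family of successive derivatives on [-1,1] certifying that D 0 is in C^r[-1,1]:
  D (Suc i) is the derivative (one-sided at the endpoints) of D i on [-1,1] for i < r,
  and D r is continuous on [-1,1].\<close>
definition Cr_derivs :: "nat \<Rightarrow> (nat \<Rightarrow> real \<Rightarrow> real) \<Rightarrow> bool" where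
  "Cr_derivs r D \<longleftrightarrow>
     (\<forall>i<r. \<forall>x\<in>{-1..1}. (D i has_real_derivative D (Suc i) x) (at x within {-1..1}))
     \<and> continuous_on {-1..1} (D r)"

definition supnorm :: "(real \<Rightarrow> real) \<Rightarrow> real" where
  "supnorm g = (SUP x\<in>{-1..1}. \<bar>g x\<bar>)"

end

theory Submission
  imports Defs
begin

text \<open>
  Let s = r - 3 (even), k = r + 2, H(t) = t^s (1 - t^2)^k, and let f be x \<mapsto> y^r H(x/y) on (-y, y)
  and 0 elsewhere; then ||f^(r)|| \<le> K for a K independent of y. An admissible p has the same
  Taylor polynomial of order r at 0 as f, so p = y^3 x^s - k y x^(s+2) + x^r q. As r is odd and s even,
  p(y) \<ge> 0 and p(-y) \<ge> 0 force q(y) - q(-y) \<ge> 2(k - 1). Since f vanishes on [1/2, 1], q is bounded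
  there by 2^r (||f - p|| + 1 + k). By Lagrange interpolation at n + 1 nodes in [1/2, 1], q(z) - q(-z)
  tends to 0 with z uniformly over polynomials of degree \<le> n that are bounded on [1/2, 1]. So for
  small y the error ||f - p|| must be large compared with K.
\<close>

definition lagrange_basis :: "(nat \<Rightarrow> real) \<Rightarrow> nat \<Rightarrow> nat \<Rightarrow> real \<Rightarrow> real" where
  "lagrange_basis t m j x = (\<Prod>l\<in>{..m}-{j}. (x - t l) / (t j - t l))"

lemma poly_lagrange_interpolation:
  fixes t :: "nat \<Rightarrow> real" and q :: "real poly"
  assumes inj: "inj_on t {..m}" and deg: "degree q \<le> m"
  shows "poly q x = (\<Sum>j\<le>m. poly q (t j) * lagrange_basis t m j x)"
proof -
  define L where "L j = (\<Prod>l\<in>{..m}-{j}. smult (1 / (t j - t l)) [:- t l, 1:])" for j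
  have poly_L: "poly (L j) z = (\<Prod>l\<in>{..m}-{j}. (z - t l) / (t j - t l))" for j z
    unfolding L_def poly_prod by (intro prod.cong) (auto simp: diff_divide_distrib)
  have degree_L: "degree (L j) \<le> m" if "j \<le> m" for j
  proof -
    have "degree (L j) \<le> (\<Sum>l\<in>{..m}-{j}. degree (smult (1 / (t j - t l)) [:- t l, 1:]))"
      unfolding L_def by (rule degree_prod_sum_le[unfolded comp_def]) simp
    also have "\<dots> \<le> (\<Sum>l\<in>{..m}-{j}. 1)"
      by (intro sum_mono) auto
    also have "\<dots> \<le> m"
      using that by (simp add: card_Diff_singleton)
    finally show ?thesis .
  qed
  define R where "R = (\<Sum>j\<le>m. smult (poly q (t j)) (L j))"
  have degree_R: "degree R \<le> m"
    unfolding R_def by (intro degree_sum_le) (auto intro!: order.trans[OF degree_smult_le] degree_L)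
  have L_at_node: "poly (L j) (t i) = (if i = j then 1 else 0)" if "i \<le> m" "j \<le> m" for i j
  proof (cases "i = j")
    case True
    have "t j - t l \<noteq> 0" if "l \<in> {..m}-{j}" for l
      using inj that \<open>j \<le> m\<close> by (auto dest: inj_onD)
    then show ?thesis
      using True by (simp add: poly_L)
  next
    case False
    then have "i \<in> {..m}-{j}"
      using that by auto
    then show ?thesis
      using False unfolding poly_L by (intro trans[OF prod_zero]) auto
  qed
  have "poly R (t i) = poly q (t i)" if "i \<in> {..m}" for i
  proof -
    have "poly R (t i) = (\<Sum>j\<le>m. if i = j then poly q (t j) else 0)"
      unfolding R_def poly_sum using that by (intro sum.cong) (auto simp: L_at_node)
    then show ?thesis
      using that by simp
  qed
  moreover have "card (t ` {..m}) = Suc m"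
    using inj by (simp add: card_image)
  ultimately have "q = R"
    using deg degree_R by (intro poly_eqI_degree[of "t ` {..m}"]) auto
  then have "poly q x = poly R x"
    by simp
  also have "\<dots> = (\<Sum>j\<le>m. poly q (t j) * lagrange_basis t m j x)"
    unfolding R_def poly_sum by (simp add: poly_L lagrange_basis_def)
  finally show ?thesis .
qed

lemma abs_poly_odd_part_le_lagrange:
  fixes q :: "real poly"
  assumes "inj_on t {..n}" "degree q \<le> n" "\<And>j. j \<le> n \<Longrightarrow> \<bar>poly q (t j)\<bar> \<le> M"
  shows "\<bar>poly q z - poly q (-z)\<bar> \<le> M * (\<Sum>j\<le>n. \<bar>lagrange_basis t n j z - lagrange_basis t n j (-z)\<bar>)"
proof -
  have "\<bar>poly q z - poly q (-z)\<bar> = \<bar>\<Sum>j\<le>n. poly q (t j) * (lagrange_basis t n j z - lagrange_basis t n j (-z))\<bar>"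
    unfolding poly_lagrange_interpolation[OF assms(1,2), of z] poly_lagrange_interpolation[OF assms(1,2), of "-z"]
    by (simp add: sum_subtractf right_diff_distrib)
  also have "\<dots> \<le> (\<Sum>j\<le>n. \<bar>poly q (t j)\<bar> * \<bar>lagrange_basis t n j z - lagrange_basis t n j (-z)\<bar>)"
    by (rule order.trans[OF sum_abs]) (simp add: abs_mult)
  also have "\<dots> \<le> (\<Sum>j\<le>n. M * \<bar>lagrange_basis t n j z - lagrange_basis t n j (-z)\<bar>)"
    using assms(3) by (intro sum_mono mult_right_mono) auto
  finally show ?thesis
    by (simp add: sum_distrib_left)
qed

lemma poly_odd_part_small_near_0:
  fixes a b \<epsilon> :: real and n :: nat
  assumes "a < b" "\<epsilon> > 0"
  obtains \<delta> where "\<delta> > 0"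
    and "\<And>q M z. degree q \<le> n \<Longrightarrow> \<forall>x\<in>{a..b}. \<bar>poly q x\<bar> \<le> M \<Longrightarrow> \<bar>z\<bar> < \<delta> \<Longrightarrow>
           \<bar>poly q z - poly q (-z)\<bar> \<le> \<epsilon> * M"
proof -
  define t where "t j = a + (b - a) * (real j / (real n + 1))" for j :: nat
  define \<Phi> where "\<Phi> z = (\<Sum>j\<le>n. \<bar>lagrange_basis t n j z - lagrange_basis t n j (-z)\<bar>)" for z
  have "isCont \<Phi> 0"
    unfolding \<Phi>_def lagrange_basis_def divide_inverse by (intro continuous_intros)
  then obtain \<delta> where "\<delta> > 0" and \<delta>: "\<forall>z. dist z 0 < \<delta> \<longrightarrow> dist (\<Phi> z) (\<Phi> 0) < \<epsilon>"
    using \<open>\<epsilon> > 0\<close> unfolding continuous_at_eps_delta by blast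
  have \<Phi>_small: "\<Phi> z < \<epsilon>" if "\<bar>z\<bar> < \<delta>" for z
    using \<delta> that by (simp add: \<Phi>_def dist_real_def)
  have nodes: "t j \<in> {a..b}" if "j \<le> n" for j
  proof -
    have "0 \<le> real j / (real n + 1)" and le_1: "real j / (real n + 1) \<le> 1"
      using that by (simp_all add: field_simps)
    then have "0 \<le> (b - a) * (real j / (real n + 1))"
      using \<open>a < b\<close> by simp
    moreover have "(b - a) * (real j / (real n + 1)) \<le> b - a"
      using le_1 \<open>a < b\<close> by (intro mult_left_le) auto
    ultimately show ?thesis
      by (simp add: t_def)
  qed
  have "inj_on t {..n}"
  proof (rule inj_onI)
    fix i j
    assume "t i = t j"
    then have "real i / (real n + 1) = real j / (real n + 1)"
      using \<open>a < b\<close> by (simp add: t_def)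
    then show "i = j"
      by (simp add: field_simps)
  qed
  show ?thesis
  proof (rule that[OF \<open>\<delta> > 0\<close>])
    fix q M z
    assume "degree q \<le> n" and bound: "\<forall>x\<in>{a..b}. \<bar>poly q x\<bar> \<le> M" and "\<bar>z\<bar> < \<delta>"
    then have "\<bar>poly q z - poly q (-z)\<bar> \<le> M * \<Phi> z"
      unfolding \<Phi>_def using \<open>inj_on t {..n}\<close> nodes by (intro abs_poly_odd_part_le_lagrange) auto
    moreover have "M \<ge> 0"
      using bound \<open>a < b\<close> by (meson abs_ge_zero atLeastAtMost_iff less_imp_le order_refl order_trans)
    ultimately show "\<bar>poly q z - poly q (-z)\<bar> \<le> \<epsilon> * M"
      using \<Phi>_small[OF \<open>\<bar>z\<bar> < \<delta>\<close>] by (smt (verit) mult_left_mono mult.commute)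
  qed
qed

lemma poly_higher_pderiv_at_0: "poly ((pderiv ^^ i) p) 0 = fact i * coeff p i"
  for p :: "real poly"
  by (simp add: poly_0_coeff_0 coeff_higher_pderiv pochhammer_fact)

lemma poly_higher_pderiv_eq_0_if_root_power_dvd:
  fixes p :: "real poly"
  assumes "[:-a, 1:] ^ k dvd p" "i < k"
  shows "poly ((pderiv ^^ i) p) a = 0"
proof -
  have dvd_higher_pderiv: "[:-a, 1:] ^ (k - j) dvd (pderiv ^^ j) p" if "j \<le> k" for j
    using that
  proof (induction j)
    case 0
    then show ?case
      using assms(1) by simp
  next
    case (Suc j)
    then obtain u where u: "(pderiv ^^ j) p = [:-a, 1:] ^ (k - j) * u"
      by (auto elim: dvdE)
    have k_minus_j: "k - j = Suc (k - Suc j)"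
      using Suc.prems by simp
    have "(pderiv ^^ Suc j) p =
        [:-a, 1:] ^ (k - Suc j) * (smult (of_nat (Suc (k - Suc j))) u + [:-a, 1:] * pderiv u)"
      unfolding funpow.simps comp_def u k_minus_j pderiv_mult pderiv_power_Suc
      by (simp add: pderiv_pCons algebra_simps)
    then show ?case
      by simp
  qed
  then have "[:-a, 1:] ^ (k - i) dvd (pderiv ^^ i) p"
    using assms(2) by simp
  then obtain u where "(pderiv ^^ i) p = [:-a, 1:] ^ (k - i) * u"
    by (erule dvdE)
  then show ?thesis
    using assms(2) by simp
qed

lemma poly_cutoff_plus_shift:
  fixes p :: "'a::comm_semiring_1 poly"
  shows "poly_cutoff r p + monom 1 r * poly_shift r p = p"
  by (rule poly_eqI) (auto simp: coeff_poly_cutoff coeff_monom_mult coeff_poly_shift)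

lemma poly_eq_poly_cutoff_plus_shift:
  fixes p :: "'a::comm_semiring_1 poly"
  shows "poly p x = poly (poly_cutoff r p) x + x ^ r * poly (poly_shift r p) x"
  by (subst (1) poly_cutoff_plus_shift[of r p, symmetric]) (simp add: poly_monom)

lemma degree_poly_shift_le: "degree (poly_shift r p) \<le> degree p"
  by (rule degree_le) (auto simp: coeff_poly_shift intro!: coeff_eq_0)

lemma poly_shift_reflection_gap:
  fixes p :: "real poly"
  assumes "odd r" "y > 0" "poly p y \<ge> 0" "poly p (-y) \<ge> 0"
    and even: "poly (poly_cutoff r p) (-y) = poly (poly_cutoff r p) y"
  shows "poly (poly_shift r p) y - poly (poly_shift r p) (-y) \<ge> - 2 * poly (poly_cutoff r p) y / y ^ r"
proof -
  have "0 \<le> poly p y + poly p (-y)"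
    using assms(3,4) by simp
  also have "\<dots> = 2 * poly (poly_cutoff r p) y + y ^ r * (poly (poly_shift r p) y - poly (poly_shift r p) (-y))"
    using \<open>odd r\<close> even by (simp add: poly_eq_poly_cutoff_plus_shift[of p _ r] algebra_simps)
  finally show ?thesis
    using \<open>y > 0\<close> by (simp add: field_simps)
qed

lemma abs_poly_shift_le:
  fixes p :: "real poly"
  assumes "x \<ge> 1/2"
  shows "\<bar>poly (poly_shift r p) x\<bar> \<le> 2 ^ r * (\<bar>poly p x\<bar> + \<bar>poly (poly_cutoff r p) x\<bar>)"
proof -
  have "1 \<le> (2 * x) ^ r"
    using assms by (intro one_le_power) auto
  then have "\<bar>poly (poly_shift r p) x\<bar> \<le> (2 * x) ^ r * \<bar>poly (poly_shift r p) x\<bar>"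
    using mult_right_mono[of 1 "(2 * x) ^ r" "\<bar>poly (poly_shift r p) x\<bar>"] by simp
  also have "\<dots> = 2 ^ r * \<bar>poly p x - poly (poly_cutoff r p) x\<bar>"
    using assms by (simp add: poly_eq_poly_cutoff_plus_shift[of p _ r] abs_mult power_mult_distrib)
  also have "\<dots> \<le> 2 ^ r * (\<bar>poly p x\<bar> + \<bar>poly (poly_cutoff r p) x\<bar>)"
    by (intro mult_left_mono abs_triangle_ineq4) auto
  finally show ?thesis .
qed

lemma has_real_derivative_0_squeeze:
  fixes f g :: "real \<Rightarrow> real"
  assumes "(g has_real_derivative 0) (at x)" "g x = 0" "f x = 0" "\<And>z. \<bar>f z\<bar> \<le> \<bar>g z\<bar>"
  shows "(f has_real_derivative 0) (at x)"
proof -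
  have "((\<lambda>z. \<bar>(g z - g x) / (z - x)\<bar>) \<longlongrightarrow> 0) (at x)"
    using assms(1) by (intro tendsto_rabs_zero) (simp add: has_field_derivative_iff)
  then have "((\<lambda>z. (f z - f x) / (z - x)) \<longlongrightarrow> 0) (at x)"
  proof (rule Lim_null_comparison[rotated])
    show "\<forall>\<^sub>F z in at x. norm ((f z - f x) / (z - x)) \<le> \<bar>(g z - g x) / (z - x)\<bar>"
      using assms(2-4) by (intro always_eventually allI) (simp add: abs_divide divide_right_mono)
  qed
  then show ?thesis
    by (simp add: has_field_derivative_iff)
qed

lemma has_real_derivative_cutoff:
  fixes g g' :: "real \<Rightarrow> real"
  assumes g: "\<And>x. (g has_real_derivative g' x) (at x)" and "y > 0"
    and vanish: "g y = 0" "g (-y) = 0" "g' y = 0" "g' (-y) = 0"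
  shows "((\<lambda>x. if \<bar>x\<bar> < y then g x else 0) has_real_derivative (if \<bar>x\<bar> < y then g' x else 0)) (at x)"
proof -
  consider "\<bar>x\<bar> < y" | "\<bar>x\<bar> > y" | "x = y \<or> x = -y"
    by linarith
  then show ?thesis
  proof cases
    case 1
    have "((\<lambda>x. if \<bar>x\<bar> < y then g x else 0) has_real_derivative g' x) (at x)"
      by (rule has_field_derivative_transform_within_open[OF g, where S = "{-y<..<y}"])
        (use 1 in auto)
    then show ?thesis
      using 1 by simp
  next
    case 2
    have "open {z :: real. y < \<bar>z\<bar>}"
      by (rule open_Collect_less) (auto intro: continuous_intros)
    then have "((\<lambda>x. if \<bar>x\<bar> < y then g x else 0) has_real_derivative 0) (at x)"
      by (rule has_field_derivative_transform_within_open[OF DERIV_const]) (use 2 in auto)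
    then show ?thesis
      using 2 by simp
  next
    case 3
    then have "(g has_real_derivative 0) (at x)"
      using g[of x] vanish by auto
    then have "((\<lambda>x. if \<bar>x\<bar> < y then g x else 0) has_real_derivative 0) (at x)"
      by (rule has_real_derivative_0_squeeze) (use 3 vanish in auto)
    then show ?thesis
      using 3 \<open>y > 0\<close> by auto
  qed
qed

lemma abs_le_supnorm:
  assumes "continuous_on {-1..1} g" "x \<in> {-1..1}"
  shows "\<bar>g x\<bar> \<le> supnorm g"
proof -
  have "compact ((\<lambda>x. \<bar>g x\<bar>) ` {-1..1})"
    using assms(1) by (intro compact_continuous_image continuous_intros) auto
  then have "bdd_above ((\<lambda>x. \<bar>g x\<bar>) ` {-1..1})"
    by (intro bounded_imp_bdd_above compact_imp_bounded)
  then show ?thesis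
    unfolding supnorm_def using assms(2) by (rule cSUP_upper2) simp
qed

lemma abs_le_supnorm_diff:
  assumes "continuous_on {-1..1} (\<lambda>x. f x - g x)" "x \<in> {-1..1}" "f x = 0"
  shows "\<bar>g x\<bar> \<le> supnorm (\<lambda>x. f x - g x)"
  using abs_le_supnorm[OF assms(1,2)] assms(3) by simp

lemma supnorm_le:
  assumes "\<And>x. x \<in> {-1..1} \<Longrightarrow> \<bar>g x\<bar> \<le> M"
  shows "supnorm g \<le> M"
  unfolding supnorm_def using assms by (intro cSUP_least) auto

lemma continuous_on_Cr_derivs:
  assumes "Cr_derivs r D" "i \<le> r"
  shows "continuous_on {-1..1} (D i)"
proof (cases "i = r")
  case False
  with assms have "\<forall>x\<in>{-1..1}. (D i has_real_derivative D (Suc i) x) (at x within {-1..1})"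
    unfolding Cr_derivs_def by simp
  then show ?thesis
    by (intro DERIV_continuous_on[where D = "D (Suc i)"]) blast
qed (use assms in \<open>simp add: Cr_derivs_def\<close>)

lemma bounded_poly_on_unit_interval:
  obtains K :: real where "K > 0" "\<And>t. \<bar>t\<bar> \<le> 1 \<Longrightarrow> \<bar>poly q t\<bar> \<le> K"
proof -
  have "bounded (poly q ` {-1..1})"
    by (intro compact_imp_bounded compact_continuous_image) (auto intro: continuous_intros)
  then obtain K where "K > 0" "\<forall>t\<in>{-1..1}. \<bar>poly q t\<bar> \<le> K"
    unfolding bounded_pos by auto
  then show ?thesis
    using that by (auto simp: abs_le_iff)
qed

definition bump_poly :: "nat \<Rightarrow> nat \<Rightarrow> real poly" where
  "bump_poly s k = monom 1 s * [:1, 0, -1:] ^ k"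

lemma poly_bump_poly: "poly (bump_poly s k) t = t ^ s * (1 - t\<^sup>2) ^ k"
  by (simp add: bump_poly_def poly_monom poly_power power2_eq_square)

lemma bump_poly_nonneg:
  assumes "even s" "\<bar>t\<bar> \<le> 1"
  shows "poly (bump_poly s k) t \<ge> 0"
proof -
  have "t\<^sup>2 \<le> 1"
    using assms(2) by (simp add: abs_square_le_1)
  then show ?thesis
    using assms(1) by (simp add: poly_bump_poly zero_le_even_power)
qed

lemma bump_poly_higher_pderiv_at_pm1:
  assumes "i < k"
  shows "poly ((pderiv ^^ i) (bump_poly s k)) 1 = 0" "poly ((pderiv ^^ i) (bump_poly s k)) (-1) = 0"
proof -
  have factor: "[:1, 0, -1:] = [:-1, 1:] * [:-1, -1 :: real:]"
    by simp
  have "bump_poly s k = [:-1, 1:] ^ k * (monom 1 s * [:-1, -1:] ^ k)"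
    unfolding bump_poly_def factor power_mult_distrib by (simp add: mult_ac)
  then have "[:-1, 1:] ^ k dvd bump_poly s k"
    by (metis dvd_triv_left)
  then show "poly ((pderiv ^^ i) (bump_poly s k)) 1 = 0"
    using assms by (rule poly_higher_pderiv_eq_0_if_root_power_dvd)
  have factor: "[:1, 0, -1:] = [:-(-1), 1:] * [:1, -1 :: real:]"
    by simp
  have "bump_poly s k = [:-(-1), 1:] ^ k * (monom 1 s * [:1, -1:] ^ k)"
    unfolding bump_poly_def factor power_mult_distrib by (simp add: mult_ac)
  then have "[:-(-1), 1:] ^ k dvd bump_poly s k"
    by (metis dvd_triv_left)
  then show "poly ((pderiv ^^ i) (bump_poly s k)) (-1) = 0"
    using assms by (rule poly_higher_pderiv_eq_0_if_root_power_dvd)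
qed

lemma low_coeffs_one_minus_square_power:
  "coeff ([:1, 0, -1:] ^ k :: real poly) 0 = 1 \<and> coeff ([:1, 0, -1:] ^ k :: real poly) 1 = 0 \<and>
   coeff ([:1, 0, -1:] ^ k :: real poly) 2 = - real k"
proof (induction k)
  case 0
  then show ?case
    by simp
next
  case (Suc k)
  have "coeff ([:1, 0, -1:] * f) j = coeff f j - (if j \<ge> 2 then coeff f (j - 2) else 0)" for f :: "real poly" and j
    by (cases j; cases "j - 1") (auto simp: mult_pCons_left coeff_pCons split: nat.splits)
  then show ?case
    using Suc by simp
qed

lemma poly_cutoff_bump_poly:
  "poly_cutoff (s + 3) (bump_poly s k) = monom 1 s - monom (real k) (s + 2)"
proof (rule poly_eqI)
  fix j
  have "j < s \<or> j = s \<or> j = s + 1 \<or> j = s + 2 \<or> j \<ge> s + 3"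
    by linarith
  then show "coeff (poly_cutoff (s + 3) (bump_poly s k)) j = coeff (monom 1 s - monom (real k) (s + 2)) j"
    using low_coeffs_one_minus_square_power[of k]
    by (auto simp: coeff_poly_cutoff bump_poly_def coeff_monom_mult)
qed

text \<open>The i-th derivative of x \<mapsto> y^c H(x/y), set to 0 outside (-y, y).\<close>

definition dilated_cutoff :: "real poly \<Rightarrow> nat \<Rightarrow> real \<Rightarrow> nat \<Rightarrow> real \<Rightarrow> real" where
  "dilated_cutoff H c y i x = (if \<bar>x\<bar> < y then y ^ c / y ^ i * poly ((pderiv ^^ i) H) (x / y) else 0)"

lemma dilated_cutoff_eq_0: "y \<le> \<bar>x\<bar> \<Longrightarrow> dilated_cutoff H c y i x = 0"
  by (simp add: dilated_cutoff_def)

lemma has_real_derivative_dilated_poly: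
  assumes "y \<noteq> 0"
  shows "((\<lambda>x. y ^ c / y ^ i * poly ((pderiv ^^ i) H) (x / y)) has_real_derivative
           y ^ c / y ^ Suc i * poly ((pderiv ^^ Suc i) H) (x / y)) (at x)"
proof -
  have "((\<lambda>x. poly ((pderiv ^^ i) H) (x / y)) has_real_derivative
          poly (pderiv ((pderiv ^^ i) H)) (x / y) * (1 / y)) (at x)"
    by (rule DERIV_chain2[OF poly_DERIV]) (use assms in \<open>auto intro!: derivative_eq_intros\<close>)
  then show ?thesis
    using assms by (auto dest: DERIV_cmult[where c = "y ^ c / y ^ i"] simp: field_simps)
qed

lemma has_real_derivative_dilated_cutoff:
  assumes "y > 0"
    and vanish: "\<And>j. j \<le> Suc i \<Longrightarrow> poly ((pderiv ^^ j) H) 1 = 0 \<and> poly ((pderiv ^^ j) H) (-1) = 0"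
  shows "(dilated_cutoff H c y i has_real_derivative dilated_cutoff H c y (Suc i) x) (at x)"
  unfolding dilated_cutoff_def
  by (rule has_real_derivative_cutoff[OF has_real_derivative_dilated_poly])
    (use \<open>y > 0\<close> vanish[of i] vanish[of "Suc i"] in auto)

lemma Cr_derivs_dilated_cutoff:
  assumes "y > 0"
    and "\<And>j. j \<le> Suc r \<Longrightarrow> poly ((pderiv ^^ j) H) 1 = 0 \<and> poly ((pderiv ^^ j) H) (-1) = 0"
  shows "Cr_derivs r (dilated_cutoff H c y)"
proof -
  have deriv: "(dilated_cutoff H c y i has_real_derivative dilated_cutoff H c y (Suc i) x) (at x)"
    if "i \<le> r" for i x
    using assms that by (intro has_real_derivative_dilated_cutoff) auto
  then have "continuous_on {-1..1} (dilated_cutoff H c y r)"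
    by (intro has_real_derivative_imp_continuous_on) auto
  with deriv show ?thesis
    unfolding Cr_derivs_def by (auto intro: has_field_derivative_at_within)
qed

lemma dilated_cutoff_nonneg:
  assumes "y > 0" "\<And>t. \<bar>t\<bar> \<le> 1 \<Longrightarrow> poly H t \<ge> 0"
  shows "dilated_cutoff H c y 0 x \<ge> 0"
  using assms by (auto simp: dilated_cutoff_def abs_divide intro!: mult_nonneg_nonneg)

lemma supnorm_dilated_cutoff_le:
  assumes "y > 0" "K \<ge> 0" "\<And>t. \<bar>t\<bar> \<le> 1 \<Longrightarrow> \<bar>poly ((pderiv ^^ i) H) t\<bar> \<le> K"
  shows "supnorm (dilated_cutoff H c y i) \<le> y ^ c / y ^ i * K"
proof (rule supnorm_le)
  fix x :: real
  show "\<bar>dilated_cutoff H c y i x\<bar> \<le> y ^ c / y ^ i * K"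
  proof (cases "\<bar>x\<bar> < y")
    case True
    then have "\<bar>poly ((pderiv ^^ i) H) (x / y)\<bar> \<le> K"
      using assms by (intro assms(3)) (simp add: abs_divide)
    then have "y ^ c / y ^ i * \<bar>poly ((pderiv ^^ i) H) (x / y)\<bar> \<le> y ^ c / y ^ i * K"
      using \<open>y > 0\<close> by (intro mult_left_mono) auto
    then show ?thesis
      using True \<open>y > 0\<close> by (simp add: dilated_cutoff_def abs_mult)
  qed (use assms in \<open>simp add: dilated_cutoff_def\<close>)
qed

lemma poly_poly_cutoff_matching_dilated_cutoff:
  fixes p :: "real poly"
  assumes "y > 0" "\<forall>i<r. poly ((pderiv ^^ i) p) 0 = dilated_cutoff H c y i 0"
  shows "poly (poly_cutoff r p) x = y ^ c * poly (poly_cutoff r H) (x / y)"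
proof -
  have "coeff p i = y ^ c * (1 / y) ^ i * coeff H i" if "i < r" for i
  proof -
    have "fact i * coeff p i = fact i * (y ^ c * (1 / y) ^ i * coeff H i)"
      using assms that by (simp add: dilated_cutoff_def poly_higher_pderiv_at_0 power_one_over)
    then show ?thesis
      by simp
  qed
  then have "poly_cutoff r p = smult (y ^ c) (poly_cutoff r H \<circ>\<^sub>p [:0, 1 / y:])"
    by (intro poly_eqI) (simp add: coeff_poly_cutoff coeff_pcompose_linear)
  then show ?thesis
    by (simp add: poly_pcompose)
qed

lemma poly_poly_cutoff_matching_dilated_bump:
  assumes "y > 0" "\<forall>i<s + 3. poly ((pderiv ^^ i) p) 0 = dilated_cutoff (bump_poly s k) (s + 3) y i 0"
  shows "poly (poly_cutoff (s + 3) p) x = y ^ 3 * x ^ s - real k * y * x ^ (s + 2)"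
proof -
  have "poly (poly_cutoff (s + 3) p) x = y ^ (s + 3) * ((x / y) ^ s - real k * (x / y) ^ (s + 2))"
    using poly_poly_cutoff_matching_dilated_cutoff[OF assms] by (simp add: poly_cutoff_bump_poly poly_monom)
  also have "\<dots> = y ^ 3 * x ^ s - real k * y * x ^ (s + 2)"
    using assms(1) by (simp add: power_divide power_add power3_eq_cube field_simps)
  finally show ?thesis .
qed

lemma matching_poly_error_lower_bound:
  fixes p :: "real poly"
  assumes "even s" "0 < y" "y \<le> 1/2" "degree p \<le> n"
    and nonneg: "\<forall>x\<in>{-1/2..1/2}. poly p x \<ge> 0"
    and match: "\<forall>i<s + 3. poly ((pderiv ^^ i) p) 0 = dilated_cutoff (bump_poly s k) (s + 3) y i 0"
    and bound: "\<forall>x\<in>{1/2..1}. \<bar>poly p x\<bar> \<le> E"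
    and small: "\<And>q M. degree q \<le> n \<Longrightarrow> \<forall>x\<in>{1/2..1}. \<bar>poly q x\<bar> \<le> M \<Longrightarrow>
                  \<bar>poly q y - poly q (-y)\<bar> \<le> \<epsilon> * M"
  shows "2 * (real k - 1) \<le> \<epsilon> * (2 ^ (s + 3) * (E + 1 + real k))"
proof -
  define q where "q = poly_shift (s + 3) p"
  have low: "poly (poly_cutoff (s + 3) p) x = y ^ 3 * x ^ s - real k * y * x ^ (s + 2)" for x
    using assms(2) match by (rule poly_poly_cutoff_matching_dilated_bump)
  have "- 2 * poly (poly_cutoff (s + 3) p) y / y ^ (s + 3) \<le> poly q y - poly q (-y)"
    unfolding q_def using assms(1-3) nonneg by (intro poly_shift_reflection_gap) (auto simp: low)
  moreover have "- 2 * poly (poly_cutoff (s + 3) p) y / y ^ (s + 3) = 2 * (real k - 1)"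
    using assms(2) by (simp add: low power_add power3_eq_cube field_simps)
  moreover have "\<bar>poly q x\<bar> \<le> 2 ^ (s + 3) * (E + 1 + real k)" if x: "x \<in> {1/2..1}" for x
  proof -
    have "y ^ 3 * x ^ s \<le> 1" "y * x ^ (s + 2) \<le> 1"
      using x assms(2,3) by (auto intro!: mult_le_one power_le_one)
    moreover have "0 \<le> y ^ 3 * x ^ s" "0 \<le> y * x ^ (s + 2)"
      using x assms(2) by auto
    moreover have "0 \<le> real k * (y * x ^ (s + 2))" "real k * (y * x ^ (s + 2)) \<le> real k"
      using calculation by (auto intro: mult_left_le)
    ultimately have "\<bar>poly (poly_cutoff (s + 3) p) x\<bar> \<le> 1 + real k"
      unfolding low mult.assoc abs_le_iff by (intro conjI; linarith)
    moreover have "\<bar>poly p x\<bar> \<le> E"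
      using bound x by blast
    ultimately have "\<bar>poly p x\<bar> + \<bar>poly (poly_cutoff (s + 3) p) x\<bar> \<le> E + 1 + real k"
      by linarith
    moreover have "\<bar>poly q x\<bar> \<le> 2 ^ (s + 3) * (\<bar>poly p x\<bar> + \<bar>poly (poly_cutoff (s + 3) p) x\<bar>)"
      unfolding q_def using x by (intro abs_poly_shift_le) auto
    ultimately show ?thesis
      by (smt (verit) mult_left_mono zero_le_power)
  qed
  then have "\<bar>poly q y - poly q (-y)\<bar> \<le> \<epsilon> * (2 ^ (s + 3) * (E + 1 + real k))"
    using small assms(4) degree_poly_shift_le[of "s + 3" p] unfolding q_def by simp
  ultimately show ?thesis
    by linarith
qed

theorem lemma3p8:
  fixes r n :: nat and A :: real
  assumes "odd r" and "r \<ge> 3" and "n \<ge> r - 1" and "A > 0"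
  shows "\<exists>D :: nat \<Rightarrow> real \<Rightarrow> real.
           Cr_derivs r D
         \<and> (\<forall>x\<in>{-1..-1/2}. D 0 x = 0)
         \<and> (\<forall>x\<in>{-1..1}. D 0 x \<ge> 0)
         \<and> (\<forall>p :: real poly.
              degree p \<le> n
            \<and> (\<forall>x\<in>{-1/2..1/2}. poly p x \<ge> 0)
            \<and> (\<forall>i<r. poly ((pderiv ^^ i) p) 0 = D i 0)
            \<longrightarrow> supnorm (\<lambda>x. D 0 x - poly p x) > A * supnorm (D r))"
proof -
  define s k where "s = r - 3" and "k = r + 2"
  have r: "r = s + 3" and "even s" and "real k \<ge> 5"
    using assms(1,2) by (auto simp: s_def k_def)
  define H where "H = bump_poly s k"
  obtain K where "K > 0" and K: "\<And>t. \<bar>t\<bar> \<le> 1 \<Longrightarrow> \<bar>poly ((pderiv ^^ r) H) t\<bar> \<le> K"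
    using bounded_poly_on_unit_interval[of "(pderiv ^^ r) H"] by blast
  define \<epsilon> where "\<epsilon> = 1 / (2 ^ r * (A * K + 1 + real k))"
  have "A * K > 0"
    using \<open>A > 0\<close> \<open>K > 0\<close> by simp
  then have "\<epsilon> > 0"
    by (simp add: \<epsilon>_def)
  obtain \<delta> where "\<delta> > 0" and small: "\<And>q M z. degree q \<le> n \<Longrightarrow> \<forall>x\<in>{1/2..1}. \<bar>poly q x\<bar> \<le> M \<Longrightarrow>
      \<bar>z\<bar> < \<delta> \<Longrightarrow> \<bar>poly q z - poly q (-z)\<bar> \<le> \<epsilon> * M"
    by (rule poly_odd_part_small_near_0[of "1/2" 1 \<epsilon> n]) (use \<open>\<epsilon> > 0\<close> in auto)
  define y where "y = min (\<delta> / 2) (1 / 2)"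
  have y: "0 < y" "y \<le> 1/2" "\<bar>y\<bar> < \<delta>"
    using \<open>\<delta> > 0\<close> by (auto simp: y_def)
  define D where "D = dilated_cutoff H r y"
  have "supnorm (D r) \<le> K"
    using supnorm_dilated_cutoff_le[OF y(1) _ K, of r] \<open>K > 0\<close> y(1) by (simp add: D_def)
  have "Cr_derivs r D"
    unfolding D_def H_def using y(1) by (intro Cr_derivs_dilated_cutoff) (auto simp: k_def bump_poly_higher_pderiv_at_pm1)
  moreover have "\<forall>x\<in>{-1..-1/2}. D 0 x = 0"
    using y unfolding D_def by (auto intro: dilated_cutoff_eq_0)
  moreover have "\<forall>x\<in>{-1..1}. D 0 x \<ge> 0"
    unfolding D_def H_def using y(1) \<open>even s\<close> by (auto intro!: dilated_cutoff_nonneg bump_poly_nonneg)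
  moreover have "A * supnorm (D r) < supnorm (\<lambda>x. D 0 x - poly p x)"
    if p: "degree p \<le> n" "\<forall>x\<in>{-1/2..1/2}. poly p x \<ge> 0" "\<forall>i<r. poly ((pderiv ^^ i) p) 0 = D i 0"
      for p
  proof (rule ccontr)
    let ?E = "supnorm (\<lambda>x. D 0 x - poly p x)"
    assume "\<not> A * supnorm (D r) < ?E"
    moreover have "A * supnorm (D r) \<le> A * K"
      using \<open>supnorm (D r) \<le> K\<close> \<open>A > 0\<close> by simp
    ultimately have "?E \<le> A * K"
      by linarith
    have "continuous_on {-1..1} (\<lambda>x. D 0 x - poly p x)"
      using continuous_on_Cr_derivs[OF \<open>Cr_derivs r D\<close>, of 0] by (intro continuous_intros) auto
    then have "\<forall>x\<in>{1/2..1}. \<bar>poly p x\<bar> \<le> ?E"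
      using y unfolding D_def by (auto intro!: abs_le_supnorm_diff dilated_cutoff_eq_0)
    then have "2 * (real k - 1) \<le> \<epsilon> * (2 ^ r * (?E + 1 + real k))"
      unfolding r using p y small \<open>even s\<close> by (intro matching_poly_error_lower_bound) (auto simp: D_def H_def r)
    also have "\<dots> \<le> \<epsilon> * (2 ^ r * (A * K + 1 + real k))"
      using \<open>?E \<le> A * K\<close> \<open>\<epsilon> > 0\<close> by simp
    also have "\<dots> = 1"
      using \<open>A * K > 0\<close> by (simp add: \<epsilon>_def)
    finally show False
      using \<open>real k \<ge> 5\<close> by simp
  qed
  ultimately show ?thesis
    by blast
qed

end
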